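(* Let $L$ be a Leibniz algebra over $F$ and $(l,r,V)$ any representation of $L$. Then the restriction of $r$ to the ideal $\{\mathrm{Rad}(L),L\}$ is nilpotent, i.e. there exists an integer $m\ge1$ with $(r_{\{\mathrm{Rad}(L),L\}})^m=\{0\}$.
   Context: $F$ is an algebraically closed field of characteristic zero; all spaces are finite-dimensional. A (right) Leibniz algebra is a vector space $L$ with bilinear bracket satisfying $[x,[y,z]]=[[x,y],z]-[[x,z],y]$. A representation $(l,r,V)$ of $L$ is a vector space $V$ with linear maps $l,r:L\to\mathrm{End}_F(V)$ such that $r_{[x,y]}=r_yr_x-r_xr_y$, $l_{[x,y]}=r_yl_x-l_xr_y$, $l_{[x,y]}=r_yl_x+l_xl_y$ (products are compositions). For a subspace $B\subseteq L$, $r_B=\{r_b:b\in B\}$ and $(r_B)^p$ is the span of all compositions $r_{b_1}\cdots r_{b_p}$, $b_i\in B$. For subspaces $X,Y$, $[X,Y]$ is the span of $[u,v]$, $u\in X$, $v\in Y$. Derived series: $D^1(L)=[L,L]$, $D^{n+1}(L)=[D^n(L),D^n(L)]$; $L$ is solvable if some $D^m(L)=0$. $\mathrm{Rad}(L)$ is the largest solvable two-sided ideal of $L$, and $\{\mathrm{Rad}(L),L\}=[\mathrm{Rad}(L),L]+[L,\mathrm{Rad}(L)]$. *)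

theory Defs
  imports Main "HOL-Computational_Algebra.Polynomial"
begin

text \<open>The field: algebraically closed (every nonconstant polynomial has a root).
  Characteristic zero is imposed via the type class field_char_0 in the statement.\<close>
definition alg_closed :: "'k::field itself \<Rightarrow> bool" where
  "alg_closed _ \<longleftrightarrow> (\<forall>p :: 'k poly. degree p > 0 \<longrightarrow> (\<exists>x. poly p x = 0))"

definition fin_dim_vs :: "('k::field \<Rightarrow> 'v::ab_group_add \<Rightarrow> 'v) \<Rightarrow> bool" where
  "fin_dim_vs sc \<longleftrightarrow> vector_space sc \<and> (\<exists>B. finite B \<and> module.span sc B = UNIV)"

text \<open>Right Leibniz algebra: bilinear bracket with [x,[y,z]] = [[x,y],z] - [[x,z],y].\<close>
definition leibniz_algebra ::
  "('k::field \<Rightarrow> 'L::ab_group_add \<Rightarrow> 'L) \<Rightarrow> ('L \<Rightarrow> 'L \<Rightarrow> 'L) \<Rightarrow> bool" where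
  "leibniz_algebra sc br \<longleftrightarrow> vector_space sc
     \<and> (\<forall>x. Vector_Spaces.linear sc sc (br x))
     \<and> (\<forall>y. Vector_Spaces.linear sc sc (\<lambda>x. br x y))
     \<and> (\<forall>x y z. br x (br y z) = br (br x y) z - br (br x z) y)"

definition leibniz_rep ::
  "('k::field \<Rightarrow> 'L::ab_group_add \<Rightarrow> 'L) \<Rightarrow> ('L \<Rightarrow> 'L \<Rightarrow> 'L) \<Rightarrow>
   ('k \<Rightarrow> 'V::ab_group_add \<Rightarrow> 'V) \<Rightarrow> ('L \<Rightarrow> 'V \<Rightarrow> 'V) \<Rightarrow> ('L \<Rightarrow> 'V \<Rightarrow> 'V) \<Rightarrow> bool" where
  "leibniz_rep sc br scV l r \<longleftrightarrow> vector_space scV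
     \<and> (\<forall>x. Vector_Spaces.linear scV scV (l x)) \<and> (\<forall>x. Vector_Spaces.linear scV scV (r x))
     \<and> (\<forall>v. Vector_Spaces.linear sc scV (\<lambda>x. l x v)) \<and> (\<forall>v. Vector_Spaces.linear sc scV (\<lambda>x. r x v))
     \<and> (\<forall>x y v. r (br x y) v = r y (r x v) - r x (r y v))
     \<and> (\<forall>x y v. l (br x y) v = r y (l x v) - l x (r y v))
     \<and> (\<forall>x y v. l (br x y) v = r y (l x v) + l x (l y v))"

definition brk ::
  "('k::field \<Rightarrow> 'L::ab_group_add \<Rightarrow> 'L) \<Rightarrow> ('L \<Rightarrow> 'L \<Rightarrow> 'L) \<Rightarrow> 'L set \<Rightarrow> 'L set \<Rightarrow> 'L set" where
  "brk sc br X Y = module.span sc {br u v | u v. u \<in> X \<and> v \<in> Y}"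

fun derived ::
  "('k::field \<Rightarrow> 'L::ab_group_add \<Rightarrow> 'L) \<Rightarrow> ('L \<Rightarrow> 'L \<Rightarrow> 'L) \<Rightarrow> nat \<Rightarrow> 'L set \<Rightarrow> 'L set" where
  "derived sc br 0 I = I"
| "derived sc br (Suc n) I = brk sc br (derived sc br n I) (derived sc br n I)"

definition solvable_sub ::
  "('k::field \<Rightarrow> 'L::ab_group_add \<Rightarrow> 'L) \<Rightarrow> ('L \<Rightarrow> 'L \<Rightarrow> 'L) \<Rightarrow> 'L set \<Rightarrow> bool" where
  "solvable_sub sc br I \<longleftrightarrow> (\<exists>m. derived sc br m I = {0})"

definition two_sided_ideal ::
  "('k::field \<Rightarrow> 'L::ab_group_add \<Rightarrow> 'L) \<Rightarrow> ('L \<Rightarrow> 'L \<Rightarrow> 'L) \<Rightarrow> 'L set \<Rightarrow> bool" where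
  "two_sided_ideal sc br I \<longleftrightarrow> module.subspace sc I
     \<and> (\<forall>x\<in>I. \<forall>y. br x y \<in> I \<and> br y x \<in> I)"

definition Rad :: "('k::field \<Rightarrow> 'L::ab_group_add \<Rightarrow> 'L) \<Rightarrow> ('L \<Rightarrow> 'L \<Rightarrow> 'L) \<Rightarrow> 'L set" where
  "Rad sc br = (THE R. two_sided_ideal sc br R \<and> solvable_sub sc br R
      \<and> (\<forall>I. two_sided_ideal sc br I \<and> solvable_sub sc br I \<longrightarrow> I \<subseteq> R))"

definition rad_L :: "('k::field \<Rightarrow> 'L::ab_group_add \<Rightarrow> 'L) \<Rightarrow> ('L \<Rightarrow> 'L \<Rightarrow> 'L) \<Rightarrow> 'L set" where
  "rad_L sc br = {a + b | a b. a \<in> brk sc br (Rad sc br) UNIV \<and> b \<in> brk sc br UNIV (Rad sc br)}"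

end

theory Submission
  imports Defs "Jordan_Normal_Form.Char_Poly"
begin

text \<open>Call a pair \<open>Y \<subset> X\<close> of \<open>r\<close>-invariant subspaces of \<open>V\<close> irreducible if no invariant subspace
  lies strictly between them. On such a subquotient every element of \<open>Rad(L)\<close> acts by a scalar:
  going down the derived series of \<open>Rad(L)\<close>, once \<open>[I,I]\<close> acts by scalars, these scalars are
  traces of commutators and hence \<open>0\<close>, so the operators \<open>r\<^sub>a\<close>, \<open>a \<in> I\<close>, commute on \<open>X/Y\<close> and have
  a common eigenvector; its weight space is invariant by Lie's invariance lemma (again a trace
  argument, which needs characteristic \<open>0\<close>) and therefore all of \<open>X/Y\<close>. As \<open>r\<^bsub>[u,x]\<^esub>\<close> and
  \<open>r\<^bsub>[x,u]\<^esub>\<close> are commutators of \<open>r\<^sub>u\<close> and \<open>r\<^sub>x\<close>, every \<open>c \<in> {Rad(L),L}\<close> then acts by \<open>0\<close> on \<open>X/Y\<close>.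
  Consequently \<open>V \<supseteq> r\<^sub>J V \<supseteq> r\<^sub>J r\<^sub>J V \<supseteq> \<dots>\<close>, with \<open>J = {Rad(L),L}\<close>, decreases strictly until it
  reaches \<open>0\<close>, so all products of \<open>dim V + 1\<close> operators \<open>r\<^sub>c\<close>, \<open>c \<in> J\<close>, vanish.\<close>

section \<open>Linear algebra modulo a subspace\<close>

lemma linear_map_simps:
  assumes "Vector_Spaces.linear s1 s2 f"
  shows "f (a + b) = f a + f b" and "f (s1 c a) = s2 c (f a)" and "f 0 = 0"
    and "f (a - b) = f a - f b" and "f (sum g A) = (\<Sum>i\<in>A. f (g i))"
proof -
  interpret Vector_Spaces.linear s1 s2 f by fact
  show "f (a + b) = f a + f b" by (rule add)
  show "f (s1 c a) = s2 c (f a)" by (rule scale)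
  show "f 0 = 0" by (rule zero)
  show "f (a - b) = f a - f b" by (rule diff)
  show "f (sum g A) = (\<Sum>i\<in>A. f (g i))" by (rule sum)
qed

lemma subspace_linear_vimage:
  assumes "Vector_Spaces.linear s1 s2 f" "module.subspace s2 T"
  shows "module.subspace s1 {x. f x \<in> T}"
proof -
  interpret Vector_Spaces.linear s1 s2 f by fact
  show ?thesis using subspace_vimage[OF assms(2)] by (simp add: vimage_def)
qed

lemma matrix_eigenvector_exists:
  fixes M :: "nat \<Rightarrow> nat \<Rightarrow> 'k::field"
  assumes "alg_closed TYPE('k)" and "n \<ge> 1"
  shows "\<exists>c u. (\<exists>i<n. u i \<noteq> 0) \<and> (\<forall>i<n. (\<Sum>j<n. M i j * u j) = c * u i)"
proof -
  define A where "A = mat n n (\<lambda>(i,j). M i j)"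
  have A: "A \<in> carrier_mat n n" unfolding A_def by auto
  have "degree (char_poly A) > 0" using degree_monic_char_poly[OF A] assms(2) by auto
  then obtain c where "poly (char_poly A) c = 0" using assms(1) unfolding alg_closed_def by blast
  then have "eigenvalue A c" using eigenvalue_root_char_poly[OF A] by blast
  then obtain v where v: "v \<in> carrier_vec n" "v \<noteq> 0\<^sub>v n" "A *\<^sub>v v = c \<cdot>\<^sub>v v"
    unfolding eigenvalue_def eigenvector_def using A by auto
  have "\<exists>i<n. v $ i \<noteq> 0"
  proof (rule ccontr)
    assume "\<not> ?thesis"
    then have "v = 0\<^sub>v n" using v(1) by (intro eq_vecI) auto
    then show False using v(2) by simp
  qed
  moreover have "(\<Sum>j<n. M i j * v $ j) = c * v $ i" if i: "i < n" for i
  proof -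
    have "(A *\<^sub>v v) $ i = (c \<cdot>\<^sub>v v) $ i" using v(3) by simp
    then show ?thesis
      using i v(1) unfolding A_def by (simp add: scalar_prod_def row_def lessThan_atLeast0)
  qed
  ultimately show ?thesis by blast
qed

locale fd_vector_space = vector_space scale
  for scale :: "'k::field_char_0 \<Rightarrow> 'V::ab_group_add \<Rightarrow> 'V" (infixr \<open>*s\<close> 75) +
  assumes finite_spanning_set: "\<exists>B. finite B \<and> span B = UNIV"
begin

abbreviation lin :: "('V \<Rightarrow> 'V) \<Rightarrow> bool" where
  "lin T \<equiv> Vector_Spaces.linear scale scale T"

definition some_basis :: "'V set" where
  "some_basis = (SOME B. finite B \<and> independent B \<and> span B = UNIV)"

lemma some_basis: "finite some_basis \<and> independent some_basis \<and> span some_basis = UNIV"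
proof -
  obtain B where B: "independent B" "UNIV \<subseteq> span B"
    using maximal_independent_subset[of UNIV] by blast
  obtain F where F: "finite F" "span F = UNIV" using finite_spanning_set by blast
  have "finite B" using independent_span_bound[OF F(1) B(1)] F(2) by blast
  then have "finite B \<and> independent B \<and> span B = UNIV" using B by auto
  then show ?thesis unfolding some_basis_def by (rule someI)
qed

sublocale finite_dimensional_vector_space scale some_basis
  using some_basis by unfold_locales auto

lemma dim_strict_mono:
  assumes "subspace S" "subspace T" "S \<subset> T" shows "dim S < dim T"
  using dim_psubset[of S T] assms(3)
  by (simp add: span_eq_iff[THEN iffD2, OF assms(1)] span_eq_iff[THEN iffD2, OF assms(2)])

lemma span_Un_subspaces:
  "subspace I \<Longrightarrow> subspace J \<Longrightarrow> span (I \<union> J) = {x + y | x y. x \<in> I \<and> y \<in> J}"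
  by (simp add: span_Un span_eq_iff[THEN iffD2])

text \<open>\<open>span_mod Y n z\<close> and \<open>independent_mod Y n z\<close> express the span and the linear independence of
  the images of \<open>z 0, \<dots>, z (n - 1)\<close> in the quotient \<open>V/Y\<close>, which is never formed.\<close>

definition span_mod :: "'V set \<Rightarrow> nat \<Rightarrow> (nat \<Rightarrow> 'V) \<Rightarrow> 'V set" where
  "span_mod Y n z = {v. \<exists>t. v - (\<Sum>i<n. t i *s z i) \<in> Y}"

definition independent_mod :: "'V set \<Rightarrow> nat \<Rightarrow> (nat \<Rightarrow> 'V) \<Rightarrow> bool" where
  "independent_mod Y n z \<longleftrightarrow> (\<forall>t. (\<Sum>i<n. t i *s z i) \<in> Y \<longrightarrow> (\<forall>i<n. t i = 0))"

lemma span_modI: "v - (\<Sum>i<n. t i *s z i) \<in> Y \<Longrightarrow> v \<in> span_mod Y n z"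
  unfolding span_mod_def by blast

lemma subspace_span_mod:
  assumes Y: "subspace Y" shows "subspace (span_mod Y n z)"
proof (rule subspaceI)
  show "0 \<in> span_mod Y n z"
    using subspace_0[OF Y] by (intro span_modI[where t="\<lambda>_. 0"]) simp
next
  fix x y assume "x \<in> span_mod Y n z" "y \<in> span_mod Y n z"
  then obtain t s where t: "x - (\<Sum>i<n. t i *s z i) \<in> Y" and s: "y - (\<Sum>i<n. s i *s z i) \<in> Y"
    unfolding span_mod_def by blast
  have eq: "x + y - (\<Sum>i<n. (t i + s i) *s z i) = (x - (\<Sum>i<n. t i *s z i)) + (y - (\<Sum>i<n. s i *s z i))"
    by (simp add: scale_left_distrib sum.distrib algebra_simps)
  have "x + y - (\<Sum>i<n. (t i + s i) *s z i) \<in> Y" unfolding eq by (rule subspace_add[OF Y t s])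
  then show "x + y \<in> span_mod Y n z" by (rule span_modI)
next
  fix c x assume "x \<in> span_mod Y n z"
  then obtain t where t: "x - (\<Sum>i<n. t i *s z i) \<in> Y" unfolding span_mod_def by blast
  have "c *s x - (\<Sum>i<n. (c * t i) *s z i) = c *s (x - (\<Sum>i<n. t i *s z i))"
    by (simp add: scale_right_diff_distrib scale_sum_right)
  then show "c *s x \<in> span_mod Y n z"
    using subspace_scale[OF Y t] by (intro span_modI[where t="\<lambda>i. c * t i"]) simp
qed

lemma span_mod_superset: "Y \<subseteq> span_mod Y n z"
  unfolding span_mod_def by (auto intro!: exI[of _ "\<lambda>_. 0"])

lemma span_mod_0: "span_mod Y 0 z = Y"
  unfolding span_mod_def by simp

lemma span_mod_base:
  assumes Y: "subspace Y" and i: "i < n" shows "z i \<in> span_mod Y n z"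
proof -
  have "(\<Sum>k<n. (if k = i then 1 else 0) *s z k) = z i"
    using i by (simp add: if_distrib[of "\<lambda>r. r *s _"] sum.delta cong: if_cong)
  then show ?thesis
    using subspace_0[OF Y] by (intro span_modI[where t="\<lambda>k. if k = i then 1 else 0"]) simp
qed

lemma span_mod_minimal:
  assumes Y: "subspace Y" and S: "subspace S" "Y \<subseteq> S" "\<forall>i<n. z i \<in> S"
  shows "span_mod Y n z \<subseteq> S"
proof
  fix v assume "v \<in> span_mod Y n z"
  then obtain t where t: "v - (\<Sum>i<n. t i *s z i) \<in> Y" unfolding span_mod_def by blast
  have "(\<Sum>i<n. t i *s z i) \<in> S" using S by (intro subspace_sum) (auto intro: subspace_scale)
  then have "(v - (\<Sum>i<n. t i *s z i)) + (\<Sum>i<n. t i *s z i) \<in> S"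
    using t S by (intro subspace_add) auto
  then show "v \<in> S" by simp
qed

lemma span_mod_mono: "subspace Y \<Longrightarrow> m \<le> n \<Longrightarrow> span_mod Y m z \<subseteq> span_mod Y n z"
  by (intro span_mod_minimal subspace_span_mod span_mod_superset) (auto intro: span_mod_base)

lemma independent_mod_coeffs_eq:
  assumes "independent_mod Y n z" and "(\<Sum>i<n. s i *s z i) - (\<Sum>i<n. t i *s z i) \<in> Y" and "i < n"
  shows "s i = t i"
proof -
  have "(\<Sum>i<n. (s i - t i) *s z i) = (\<Sum>i<n. s i *s z i) - (\<Sum>i<n. t i *s z i)"
    by (simp add: scale_left_diff_distrib sum_subtractf)
  then show ?thesis using assms unfolding independent_mod_def by (metis right_minus_eq)
qed

lemma independent_mod_Suc:
  assumes Y: "subspace Y" and ind: "independent_mod Y n z" and zn: "z n \<notin> span_mod Y n z"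
  shows "independent_mod Y (Suc n) z"
  unfolding independent_mod_def
proof (intro allI impI)
  fix t i assume s: "(\<Sum>i<Suc n. t i *s z i) \<in> Y" and i: "i < Suc n"
  have "t n = 0"
  proof (rule ccontr)
    assume tn: "t n \<noteq> 0"
    have "(- inverse (t n)) *s (\<Sum>i<Suc n. t i *s z i) \<in> Y"
      using s by (rule subspace_scale[OF Y])
    moreover have "(- inverse (t n)) *s (\<Sum>i<Suc n. t i *s z i)
        = - (z n - (\<Sum>i<n. (- inverse (t n) * t i) *s z i))"
      using tn by (simp add: sum.lessThan_Suc scale_sum_right algebra_simps)
    ultimately have "z n - (\<Sum>i<n. (- inverse (t n) * t i) *s z i) \<in> Y"
      using subspace_neg[OF Y] by fastforce
    then have "z n \<in> span_mod Y n z" by (rule span_modI)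
    then show False using zn by simp
  qed
  moreover from this have "(\<Sum>i<n. t i *s z i) \<in> Y" using s by (simp add: sum.lessThan_Suc)
  ultimately show "t i = 0" using ind i unfolding independent_mod_def by (metis less_Suc_eq)
qed

lemma independent_mod_le_dimension:
  assumes Y: "subspace Y" and ind: "independent_mod Y n z"
  shows "n \<le> dimension"
proof -
  have coeffs_0: "(\<Sum>k<n. t k *s z k) = 0 \<Longrightarrow> i < n \<Longrightarrow> t i = 0" for t i
    using ind subspace_0[OF Y] unfolding independent_mod_def by auto
  have inj: "inj_on z {..<n}"
  proof (rule inj_onI, rule ccontr)
    fix i j assume i: "i \<in> {..<n}" and j: "j \<in> {..<n}" and e: "z i = z j" and ne: "i \<noteq> j"
    let ?t = "\<lambda>k. (if k = i then 1 else 0) - (if k = j then 1 else (0::'k))"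
    have "(\<Sum>k<n. ?t k *s z k) = z i - z j"
      using i j by (simp add: scale_left_diff_distrib sum_subtractf
          if_distrib[of "\<lambda>r. r *s _"] sum.delta cong: if_cong)
    then show False using coeffs_0[of ?t i] e i ne by simp
  qed
  have "independent (z ` {..<n})"
    unfolding dependent_finite[OF finite_imageI[OF finite_lessThan]]
  proof
    assume "\<exists>u. (\<exists>v\<in>z ` {..<n}. u v \<noteq> 0) \<and> (\<Sum>v\<in>z ` {..<n}. u v *s v) = 0"
    then obtain c k where s: "(\<Sum>v\<in>z ` {..<n}. c v *s v) = 0" and k: "k < n" "c (z k) \<noteq> 0"
      by blast
    have "(\<Sum>k<n. c (z k) *s z k) = 0" using s by (simp add: sum.reindex[OF inj])
    then show False using k coeffs_0[of "\<lambda>k. c (z k)"] by auto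
  qed
  then have "card (z ` {..<n}) \<le> dimension"
    using independent_card_le_dim[of _ UNIV] by (simp add: dimension_def)
  then show ?thesis using card_image[OF inj] by simp
qed

lemma exists_basis_mod:
  assumes Y: "subspace Y" and Z: "subspace Z" "Y \<subseteq> Z"
  shows "\<exists>n z. (\<forall>i<n. z i \<in> Z) \<and> independent_mod Y n z \<and> span_mod Y n z = Z"
proof -
  let ?S = "{n. \<exists>z. (\<forall>i<n. z i \<in> Z) \<and> independent_mod Y n z}"
  have "?S \<subseteq> {..dimension}" using independent_mod_le_dimension[OF Y] by auto
  then have fin: "finite ?S" by (rule finite_subset) simp
  define m where "m = Max ?S"
  have "0 \<in> ?S" unfolding independent_mod_def by simp
  then have "m \<in> ?S" unfolding m_def using fin by (intro Max_in) auto
  then obtain z where z: "\<forall>i<m. z i \<in> Z" "independent_mod Y m z" by blast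
  have "Z \<subseteq> span_mod Y m z"
  proof (rule subsetI, rule ccontr)
    fix v assume v: "v \<in> Z" and nv: "v \<notin> span_mod Y m z"
    let ?z = "z(m := v)"
    have eqs: "(\<Sum>i<m. t i *s ?z i) = (\<Sum>i<m. t i *s z i)" for t by (intro sum.cong) auto
    have "independent_mod Y m ?z" using z(2) unfolding independent_mod_def eqs .
    moreover have "?z m \<notin> span_mod Y m ?z" using nv unfolding span_mod_def eqs by simp
    ultimately have "independent_mod Y (Suc m) ?z" by (rule independent_mod_Suc[OF Y])
    moreover have "\<forall>i<Suc m. ?z i \<in> Z" using z(1) v by (simp add: less_Suc_eq)
    ultimately have "Suc m \<in> ?S" by blast
    then have "Suc m \<le> m" unfolding m_def by (rule Max_ge[OF fin])
    then show False by simp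
  qed
  moreover have "span_mod Y m z \<subseteq> Z" by (rule span_mod_minimal[OF Y Z z(1)])
  ultimately show ?thesis using z by blast
qed

lemma exists_basis_mod_psubset:
  assumes Y: "subspace Y" and X: "subspace X" "Y \<subset> X"
  shows "\<exists>n z. n \<ge> 1 \<and> (\<forall>i<n. z i \<in> X) \<and> independent_mod Y n z \<and> span_mod Y n z = X"
proof -
  obtain n z where z: "\<forall>i<n. z i \<in> X" "independent_mod Y n z" "span_mod Y n z = X"
    using exists_basis_mod[OF Y X(1)] X(2) by blast
  moreover have "n \<ge> 1" using z(3) X(2) span_mod_0[of Y z] by (cases n) auto
  ultimately show ?thesis by blast
qed

lemma exists_cyclic_basis_mod:
  assumes Y: "subspace Y" and w: "w \<notin> Y"
  shows "\<exists>n\<ge>1. independent_mod Y n (\<lambda>i. (T ^^ i) w) \<and> (T ^^ n) w \<in> span_mod Y n (\<lambda>i. (T ^^ i) w)"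
proof -
  let ?P = "\<lambda>k. independent_mod Y k (\<lambda>i. (T ^^ i) w)"
  have P1: "?P 1"
    unfolding independent_mod_def
  proof (intro allI impI)
    fix t i assume s: "(\<Sum>i<1. t i *s (T ^^ i) w) \<in> Y" and i: "i < (1::nat)"
    have "t 0 *s w \<in> Y" using s by simp
    then have "inverse (t 0) *s t 0 *s w \<in> Y" by (rule subspace_scale[OF Y])
    then show "t i = 0" using w i by (cases "t 0 = 0") auto
  qed
  have ex: "\<not> ?P (Suc dimension)" using independent_mod_le_dimension[OF Y, of "Suc dimension"] by auto
  define k where "k = (LEAST k. \<not> ?P (Suc k))"
  have k: "\<not> ?P (Suc k)" unfolding k_def using ex by (rule LeastI)
  have k1: "k \<ge> 1" using k P1 by (cases k) auto
  have "?P (Suc (k - 1))"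
    using not_less_Least[of "k - 1" "\<lambda>k. \<not> ?P (Suc k)"] k1 unfolding k_def by fastforce
  then have "?P k" using k1 by simp
  then show ?thesis using independent_mod_Suc[OF Y] k k1 by blast
qed

lemma image_span_mod_iterates:
  assumes Y: "subspace Y" and T: "lin T" "T ` Y \<subseteq> Y"
    and v: "v \<in> span_mod Y j (\<lambda>i. (T ^^ i) w)"
  shows "T v \<in> span_mod Y (Suc j) (\<lambda>i. (T ^^ i) w)"
proof -
  let ?S = "span_mod Y (Suc j) (\<lambda>i. (T ^^ i) w)"
  have "span_mod Y j (\<lambda>i. (T ^^ i) w) \<subseteq> {v. T v \<in> ?S}"
  proof (rule span_mod_minimal[OF Y subspace_linear_vimage[OF T(1) subspace_span_mod[OF Y]]])
    show "Y \<subseteq> {v. T v \<in> ?S}" using T(2) span_mod_superset by blast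
    show "\<forall>i<j. (T ^^ i) w \<in> {v. T v \<in> ?S}"
      using span_mod_base[OF Y, of "Suc _" "Suc j" "\<lambda>i. (T ^^ i) w"] by simp
  qed
  then show ?thesis using v by blast
qed

lemma exists_matrix_mod:
  assumes "\<forall>j<n. A (z j) \<in> span_mod Y n z"
  shows "\<exists>a. \<forall>j<n. A (z j) - (\<Sum>i<n. a i j *s z i) \<in> Y"
proof -
  have "\<forall>j. \<exists>t. j < n \<longrightarrow> A (z j) - (\<Sum>i<n. t i *s z i) \<in> Y"
    using assms unfolding span_mod_def by blast
  then obtain f where "\<forall>j. j < n \<longrightarrow> A (z j) - (\<Sum>i<n. f j i *s z i) \<in> Y" by metis
  then show ?thesis by (intro exI[of _ "\<lambda>i j. f j i"]) auto
qed

lemma matrix_mod_apply: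
  assumes Y: "subspace Y" and A: "lin A" "A ` Y \<subseteq> Y"
    and a: "\<forall>j<n. A (z j) - (\<Sum>i<n. a i j *s z i) \<in> Y"
  shows "A (\<Sum>j<n. u j *s z j) - (\<Sum>i<n. (\<Sum>j<n. a i j * u j) *s z i) \<in> Y"
proof -
  have "(\<Sum>i<n. (\<Sum>j<n. a i j * u j) *s z i) = (\<Sum>i<n. \<Sum>j<n. (u j * a i j) *s z i)"
    by (simp add: scale_sum_left mult.commute)
  also have "\<dots> = (\<Sum>j<n. u j *s (\<Sum>i<n. a i j *s z i))"
    by (subst sum.swap) (simp add: scale_sum_right)
  finally have "A (\<Sum>j<n. u j *s z j) - (\<Sum>i<n. (\<Sum>j<n. a i j * u j) *s z i)
      = (\<Sum>j<n. u j *s (A (z j) - (\<Sum>i<n. a i j *s z i)))"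
    by (simp add: linear_map_simps[OF A(1)] scale_right_diff_distrib sum_subtractf)
  also have "\<dots> \<in> Y" using a by (intro subspace_sum[OF Y] subspace_scale[OF Y]) auto
  finally show ?thesis .
qed

lemma matrix_mod_compose:
  assumes Y: "subspace Y" and A: "lin A" "A ` Y \<subseteq> Y" and B: "B ` Y \<subseteq> Y"
    and a: "\<forall>j<n. A (z j) - (\<Sum>i<n. a i j *s z i) \<in> Y"
    and b: "\<forall>j<n. B (z j) - (\<Sum>i<n. b i j *s z i) \<in> Y" and j: "j < n"
  shows "A (B (z j)) - (\<Sum>i<n. (\<Sum>k<n. a i k * b k j) *s z i) \<in> Y"
proof -
  have "A (B (z j)) - A (\<Sum>k<n. b k j *s z k) \<in> Y"
    using b j A(2) by (metis image_subset_iff linear_map_simps(4)[OF A(1)])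
  moreover have "A (\<Sum>k<n. b k j *s z k) - (\<Sum>i<n. (\<Sum>k<n. a i k * b k j) *s z i) \<in> Y"
    by (rule matrix_mod_apply[OF Y A a])
  ultimately show ?thesis using subspace_add[OF Y] by fastforce
qed

lemma eigenvector_mod:
  assumes ac: "alg_closed TYPE('k)" and Y: "subspace Y" and X: "subspace X" "Y \<subset> X"
    and T: "lin T" "T ` Y \<subseteq> Y" "T ` X \<subseteq> X"
  shows "\<exists>v\<in>X. v \<notin> Y \<and> (\<exists>c. T v - c *s v \<in> Y)"
proof -
  obtain n z where n: "n \<ge> 1" and z: "\<forall>i<n. z i \<in> X" "independent_mod Y n z" "span_mod Y n z = X"
    using exists_basis_mod_psubset[OF Y X] by blast
  obtain a where a: "\<forall>j<n. T (z j) - (\<Sum>i<n. a i j *s z i) \<in> Y"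
    using exists_matrix_mod[of n T z Y] z T(3) by blast
  obtain c u where cu: "\<exists>i<n. u i \<noteq> 0" "\<forall>i<n. (\<Sum>j<n. a i j * u j) = c * u i"
    using matrix_eigenvector_exists[OF ac n] by blast
  define v where "v = (\<Sum>j<n. u j *s z j)"
  have "v \<in> X" unfolding v_def using z(1) by (intro subspace_sum[OF X(1)] subspace_scale[OF X(1)]) auto
  moreover have "v \<notin> Y" using cu(1) z(2) unfolding independent_mod_def v_def by blast
  moreover have "(\<Sum>i<n. (\<Sum>j<n. a i j * u j) *s z i) = c *s v"
    unfolding v_def using cu(2) by (simp add: scale_sum_right)
  then have "T v - c *s v \<in> Y" using matrix_mod_apply[OF Y T(1,2) a, of u] unfolding v_def by simp
  ultimately show ?thesis by blast
qed

lemma sum_lessThan_column: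
  "j < (n::nat) \<Longrightarrow> (\<Sum>i<n. (if i < j then t i else if i = j then c else 0) *s z i)
    = c *s z j + (\<Sum>i<j. t i *s z i)"
proof (induction n)
  case (Suc n)
  then show ?case by (cases "j = n") (simp_all add: sum.lessThan_Suc)
qed simp

text \<open>The trace of a commutator vanishes, so a commutator acting on \<open>span_mod Y n z\<close> by a
  triangular matrix with constant diagonal \<open>\<mu>\<close> has \<open>n \<mu> = 0\<close>.\<close>
lemma triangular_commutator_diagonal_eq_0:
  assumes Y: "subspace Y" and ind: "independent_mod Y n z" and n: "n \<ge> 1"
    and A: "lin A" "A ` Y \<subseteq> Y" "\<forall>j<n. A (z j) \<in> span_mod Y n z"
    and B: "lin B" "B ` Y \<subseteq> Y" "\<forall>j<n. B (z j) \<in> span_mod Y n z"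
    and tri: "\<forall>j<n. A (B (z j)) - B (A (z j)) - \<mu> *s z j \<in> span_mod Y j z"
  shows "\<mu> = 0"
proof -
  obtain a where a: "\<forall>j<n. A (z j) - (\<Sum>i<n. a i j *s z i) \<in> Y"
    using exists_matrix_mod[OF A(3)] by blast
  obtain b where b: "\<forall>j<n. B (z j) - (\<Sum>i<n. b i j *s z i) \<in> Y"
    using exists_matrix_mod[OF B(3)] by blast
  define d where "d i j = (\<Sum>k<n. a i k * b k j) - (\<Sum>k<n. b i k * a k j)" for i j
  have "d j j = \<mu>" if j: "j < n" for j
  proof -
    have "A (B (z j)) - B (A (z j)) - (\<Sum>i<n. d i j *s z i)
        = (A (B (z j)) - (\<Sum>i<n. (\<Sum>k<n. a i k * b k j) *s z i))
          - (B (A (z j)) - (\<Sum>i<n. (\<Sum>k<n. b i k * a k j) *s z i))"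
      by (simp add: d_def scale_left_diff_distrib sum_subtractf algebra_simps)
    also have "\<dots> \<in> Y"
      by (intro subspace_diff[OF Y] matrix_mod_compose[OF Y A(1,2) B(2) a b j]
          matrix_mod_compose[OF Y B(1,2) A(2) b a j])
    finally have D: "A (B (z j)) - B (A (z j)) - (\<Sum>i<n. d i j *s z i) \<in> Y" .
    obtain t where t: "A (B (z j)) - B (A (z j)) - \<mu> *s z j - (\<Sum>i<j. t i *s z i) \<in> Y"
      using tri j unfolding span_mod_def by blast
    let ?t = "\<lambda>i. if i < j then t i else if i = j then \<mu> else 0"
    have "(\<Sum>i<n. d i j *s z i) - (\<Sum>i<n. ?t i *s z i)
        = (A (B (z j)) - B (A (z j)) - \<mu> *s z j - (\<Sum>i<j. t i *s z i))
          - (A (B (z j)) - B (A (z j)) - (\<Sum>i<n. d i j *s z i))"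
      using sum_lessThan_column[OF j, of t \<mu> z] by (simp add: algebra_simps)
    also have "\<dots> \<in> Y" by (rule subspace_diff[OF Y t D])
    finally have "(\<Sum>i<n. d i j *s z i) - (\<Sum>i<n. ?t i *s z i) \<in> Y" .
    from independent_mod_coeffs_eq[OF ind this j] show ?thesis by simp
  qed
  then have "(\<Sum>j<n. d j j) = of_nat n * \<mu>" by simp
  moreover have "(\<Sum>j<n. d j j) = 0"
    unfolding d_def sum_subtractf by (subst (2) sum.swap) (simp add: mult.commute)
  ultimately show ?thesis using n by simp
qed

lemma commutator_scalar_mod_eq_0:
  assumes Y: "subspace Y" and X: "subspace X" "Y \<subset> X"
    and A: "lin A" "A ` Y \<subseteq> Y" "A ` X \<subseteq> X" and B: "lin B" "B ` Y \<subseteq> Y" "B ` X \<subseteq> X"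
    and comm: "\<forall>w\<in>X. A (B w) - B (A w) - \<mu> *s w \<in> Y"
  shows "\<mu> = 0"
proof -
  obtain n z where n: "n \<ge> 1" and z: "\<forall>i<n. z i \<in> X" "independent_mod Y n z" "span_mod Y n z = X"
    using exists_basis_mod_psubset[OF Y X] by blast
  show ?thesis
  proof (rule triangular_commutator_diagonal_eq_0[OF Y z(2) n A(1,2) _ B(1,2)])
    show "\<forall>j<n. A (z j) \<in> span_mod Y n z" "\<forall>j<n. B (z j) \<in> span_mod Y n z"
      using z(1,3) A(3) B(3) by auto
    show "\<forall>j<n. A (B (z j)) - B (A (z j)) - \<mu> *s z j \<in> span_mod Y j z"
      using comm z(1) span_mod_superset by blast
  qed
qed

lemma subspace_weight_mod:
  assumes X: "subspace X" and Y: "subspace Y" and A: "\<And>a. a \<in> I \<Longrightarrow> lin (A a)"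
  shows "subspace {w\<in>X. \<forall>a\<in>I. A a w - c a *s w \<in> Y}" (is "subspace ?W")
proof (rule subspaceI)
  show "0 \<in> ?W" using subspace_0[OF X] subspace_0[OF Y] by (auto simp: linear_map_simps(3)[OF A])
next
  fix x y assume "x \<in> ?W" "y \<in> ?W"
  then have xy: "x \<in> X" "y \<in> X" and hx: "\<forall>a\<in>I. A a x - c a *s x \<in> Y"
    and hy: "\<forall>a\<in>I. A a y - c a *s y \<in> Y" by auto
  have "A a (x + y) - c a *s (x + y) \<in> Y" if a: "a \<in> I" for a
  proof -
    have "A a (x + y) - c a *s (x + y) = (A a x - c a *s x) + (A a y - c a *s y)"
      using A[OF a] by (simp add: linear_map_simps scale_right_distrib)
    then show ?thesis using hx hy a subspace_add[OF Y] by simp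
  qed
  then show "x + y \<in> ?W" using subspace_add[OF X xy] by blast
next
  fix b x assume "x \<in> ?W"
  then have x: "x \<in> X" and hx: "\<forall>a\<in>I. A a x - c a *s x \<in> Y" by auto
  have "A a (b *s x) - c a *s (b *s x) \<in> Y" if a: "a \<in> I" for a
  proof -
    have "A a (b *s x) - c a *s (b *s x) = b *s (A a x - c a *s x)"
      using A[OF a] by (simp add: linear_map_simps scale_right_diff_distrib mult.commute)
    then show ?thesis using hx a subspace_scale[OF Y] by simp
  qed
  then show "b *s x \<in> ?W" using subspace_scale[OF X x] by blast
qed

lemma weight_mod_superset:
  assumes Y: "subspace Y" "Y \<subseteq> X" and A: "\<And>a. a \<in> I \<Longrightarrow> A a ` Y \<subseteq> Y"
  shows "Y \<subseteq> {w\<in>X. \<forall>a\<in>I. A a w - c a *s w \<in> Y}"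
proof
  fix y assume y: "y \<in> Y"
  have "A a y - c a *s y \<in> Y" if "a \<in> I" for a
    using A[OF that] y by (intro subspace_diff[OF Y(1)] subspace_scale[OF Y(1)]) auto
  then show "y \<in> {w\<in>X. \<forall>a\<in>I. A a w - c a *s w \<in> Y}" using y Y(2) by auto
qed

lemma weight_mod_invariant:
  assumes Y: "subspace Y" and B: "lin B" "B ` Y \<subseteq> Y" "B ` X \<subseteq> X"
    and comm: "\<forall>a\<in>I. \<forall>w\<in>X. A a (B w) - B (A a w) \<in> Y"
    and w: "w \<in> {w\<in>X. \<forall>a\<in>I. A a w - c a *s w \<in> Y}"
  shows "B w \<in> {w\<in>X. \<forall>a\<in>I. A a w - c a *s w \<in> Y}"
proof -
  have "A a (B w) - c a *s B w \<in> Y" if a: "a \<in> I" for a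
  proof -
    have eq: "A a (B w) - c a *s B w = (A a (B w) - B (A a w)) + B (A a w - c a *s w)"
      using B(1) by (simp add: linear_map_simps)
    show ?thesis unfolding eq using comm w a B(2) by (intro subspace_add[OF Y]) auto
  qed
  then show ?thesis using w B(3) by auto
qed

lemma common_eigenvector_mod:
  fixes A :: "nat \<Rightarrow> 'V \<Rightarrow> 'V"
  assumes ac: "alg_closed TYPE('k)" and Y: "subspace Y" and X: "subspace X" "Y \<subset> X"
    and A: "\<forall>i<p. lin (A i) \<and> A i ` Y \<subseteq> Y \<and> A i ` X \<subseteq> X"
    and comm: "\<forall>i<p. \<forall>j<p. \<forall>w\<in>X. A i (A j w) - A j (A i w) \<in> Y"
  shows "\<exists>v\<in>X. v \<notin> Y \<and> (\<exists>c. \<forall>i<p. A i v - c i *s v \<in> Y)"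
proof -
  have "q \<le> p \<Longrightarrow> \<exists>v\<in>X. v \<notin> Y \<and> (\<exists>c. \<forall>i<q. A i v - c i *s v \<in> Y)" for q
  proof (induction q)
    case 0
    then show ?case using X by blast
  next
    case (Suc q)
    then obtain v c where v: "v \<in> X" "v \<notin> Y" "\<forall>i<q. A i v - c i *s v \<in> Y" by auto
    have q: "q < p" using Suc by simp
    define Z where "Z = {w\<in>X. \<forall>i\<in>{..<q}. A i w - c i *s w \<in> Y}"
    have Aq: "lin (A q)" "A q ` Y \<subseteq> Y" "A q ` X \<subseteq> X" using A q by auto
    have Ai: "lin (A i)" "A i ` Y \<subseteq> Y" if "i < q" for i using A q that by simp_all
    have Z: "subspace Z" unfolding Z_def using Ai(1) by (intro subspace_weight_mod[OF X(1) Y]) auto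
    have "Y \<subseteq> Z" unfolding Z_def using Ai(2) X(2) by (intro weight_mod_superset[OF Y]) auto
    moreover have "v \<in> Z" unfolding Z_def using v by auto
    ultimately have YZ: "Y \<subset> Z" using v(2) by blast
    have "\<forall>i\<in>{..<q}. \<forall>w\<in>X. A i (A q w) - A q (A i w) \<in> Y" using comm q by simp
    then have "A q ` Z \<subseteq> Z"
      unfolding Z_def by (intro image_subsetI weight_mod_invariant[OF Y Aq])
    then obtain v' c' where v': "v' \<in> Z" "v' \<notin> Y" "A q v' - c' *s v' \<in> Y"
      using eigenvector_mod[OF ac Y Z YZ Aq(1,2)] by blast
    then have "\<forall>i<Suc q. A i v' - (c(q := c')) i *s v' \<in> Y"
      unfolding Z_def by (auto simp: less_Suc_eq)
    then show ?case using v' unfolding Z_def by blast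
  qed
  then show ?thesis by blast
qed

end

section \<open>Solvable ideals of a Leibniz algebra\<close>

locale fd_leibniz_algebra = fd_vector_space scL
  for scL :: "'k::field_char_0 \<Rightarrow> 'L::ab_group_add \<Rightarrow> 'L" +
  fixes br :: "'L \<Rightarrow> 'L \<Rightarrow> 'L"
  assumes leibniz: "leibniz_algebra scL br"
begin

lemma linear_br: "lin (br x)" "lin (\<lambda>u. br u y)"
  using leibniz unfolding leibniz_algebra_def by auto

lemma leibniz_identity: "br x (br y z) = br (br x y) z - br (br x z) y"
  using leibniz unfolding leibniz_algebra_def by auto

lemma br_simps:
  "br x (u + v) = br x u + br x v" "br (u + v) y = br u y + br v y"
  "br x 0 = 0" "br 0 y = 0" "br x (u - v) = br x u - br x v" "br (u - v) y = br u y - br v y"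
  using linear_map_simps[OF linear_br(1)[of x]] linear_map_simps[OF linear_br(2)[of y]] by auto

abbreviation ideal :: "'L set \<Rightarrow> bool" where
  "ideal \<equiv> two_sided_ideal scL br"

abbreviation der :: "nat \<Rightarrow> 'L set \<Rightarrow> 'L set" where
  "der \<equiv> derived scL br"

lemma brk_base: "u \<in> X \<Longrightarrow> v \<in> Y \<Longrightarrow> br u v \<in> brk scL br X Y"
  unfolding brk_def by (rule span_base) blast

lemma brk_minimal:
  "subspace S \<Longrightarrow> (\<And>u v. u \<in> X \<Longrightarrow> v \<in> Y \<Longrightarrow> br u v \<in> S) \<Longrightarrow> brk scL br X Y \<subseteq> S"
  unfolding brk_def by (rule span_minimal) auto

lemma subspace_brk: "subspace (brk scL br X Y)"
  unfolding brk_def by simp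

lemma subspace_derived: "subspace I \<Longrightarrow> subspace (der k I)"
  by (cases k) (auto simp: subspace_brk)

lemma derived_mono: "A \<subseteq> B \<Longrightarrow> der k A \<subseteq> der k B"
  by (induction k) (auto simp: brk_def intro!: span_mono)

lemma derived_add: "der (m + k) X = der k (der m X)"
  by (induction k) auto

lemma derived_left_ideal:
  assumes I: "subspace I" and left: "\<And>x a. a \<in> I \<Longrightarrow> br x a \<in> I"
  shows "a \<in> der k I \<Longrightarrow> br x a \<in> der k I"
proof (induction k arbitrary: x a)
  case 0
  then show ?case using left by simp
next
  case (Suc k)
  let ?D = "der k I"
  have "brk scL br ?D ?D \<subseteq> {c. br x c \<in> brk scL br ?D ?D}"
  proof (rule brk_minimal[OF subspace_linear_vimage[OF linear_br(1) subspace_brk]])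
    fix u v assume "u \<in> ?D" "v \<in> ?D"
    then have "br (br x u) v \<in> brk scL br ?D ?D" "br (br x v) u \<in> brk scL br ?D ?D"
      using Suc.IH by (auto intro: brk_base)
    then show "br u v \<in> {c. br x c \<in> brk scL br ?D ?D}"
      using subspace_diff[OF subspace_brk] by (simp add: leibniz_identity)
  qed
  then show ?case using Suc.prems by auto
qed

lemma ideal_span_Un:
  assumes I: "ideal I" and J: "ideal J" shows "ideal (span (I \<union> J))"
proof -
  have sub: "subspace I" "subspace J" using I J unfolding two_sided_ideal_def by auto
  have "br s y \<in> span (I \<union> J) \<and> br y s \<in> span (I \<union> J)" if hs: "s \<in> span (I \<union> J)" for s y
  proof -
    obtain a b where s: "s = a + b" "a \<in> I" "b \<in> J"
      using hs span_Un_subspaces[OF sub] by auto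
    have "br a y \<in> I" "br y a \<in> I" "br b y \<in> J" "br y b \<in> J"
      using s I J unfolding two_sided_ideal_def by auto
    then show ?thesis using s(1) span_Un_subspaces[OF sub] by (auto simp: br_simps)
  qed
  then show ?thesis unfolding two_sided_ideal_def by simp
qed

lemma derived_span_Un_subset:
  assumes I: "subspace I" and J: "ideal J"
  shows "der k (span (I \<union> J)) \<subseteq> span (der k I \<union> J)"
proof (induction k)
  case 0
  then show ?case using I J by (simp add: two_sided_ideal_def span_eq_iff[THEN iffD2])
next
  case (Suc k)
  have Jsub: "subspace J" and Jid: "\<And>x y. x \<in> J \<Longrightarrow> br x y \<in> J \<and> br y x \<in> J"
    using J unfolding two_sided_ideal_def by auto
  note sum_eq = span_Un_subspaces[OF subspace_derived[OF I] Jsub]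
  show ?case unfolding derived.simps
  proof (rule brk_minimal[OF subspace_span])
    fix u v assume "u \<in> der k (span (I \<union> J))" "v \<in> der k (span (I \<union> J))"
    then obtain a b a' b' where uv: "u = a + b" "v = a' + b'"
      and a: "a \<in> der k I" "a' \<in> der k I" and b: "b \<in> J" "b' \<in> J"
      using Suc.IH sum_eq by blast
    have "br a b' + br b a' + br b b' \<in> J"
      using a b Jid subspace_add[OF Jsub] by simp
    moreover have "br a a' \<in> brk scL br (der k I) (der k I)" using a by (rule brk_base)
    moreover have "br u v = br a a' + (br a b' + br b a' + br b b')"
      using uv by (simp add: br_simps algebra_simps)
    ultimately show "br u v \<in> span (brk scL br (der k I) (der k I) \<union> J)"
      using span_Un_subspaces[OF subspace_derived[OF I, of "Suc k"] Jsub] by auto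
  qed
qed

lemma solvable_span_Un:
  assumes I: "ideal I" "solvable_sub scL br I" and J: "ideal J" "solvable_sub scL br J"
  shows "solvable_sub scL br (span (I \<union> J))"
proof -
  obtain m where m: "der m I = {0}" using I(2) unfolding solvable_sub_def by blast
  obtain m' where m': "der m' J = {0}" using J(2) unfolding solvable_sub_def by blast
  have "subspace I" "subspace J" using I J unfolding two_sided_ideal_def by auto
  have "der m (span (I \<union> J)) \<subseteq> J"
    using derived_span_Un_subset[OF \<open>subspace I\<close> J(1), of m] m \<open>subspace J\<close>
    by (simp add: span_eq_iff[THEN iffD2] span_insert_0)
  then have "der (m + m') (span (I \<union> J)) \<subseteq> {0}" unfolding derived_add using derived_mono m' by blast
  moreover have "0 \<in> der (m + m') (span (I \<union> J))" by (simp add: subspace_0 subspace_derived)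
  ultimately show ?thesis unfolding solvable_sub_def by blast
qed

text \<open>Among the solvable ideals one of maximal dimension absorbs every other, since its sum with
  any solvable ideal is again a solvable ideal.\<close>
lemma largest_solvable_ideal_exists:
  "\<exists>R. ideal R \<and> solvable_sub scL br R \<and> (\<forall>I. ideal I \<and> solvable_sub scL br I \<longrightarrow> I \<subseteq> R)"
proof -
  let ?S = "{I. ideal I \<and> solvable_sub scL br I}"
  have "{0} \<in> ?S"
    unfolding two_sided_ideal_def solvable_sub_def by (auto simp: br_simps intro: exI[of _ 0])
  moreover have fin: "finite (dim ` ?S)"
    by (rule finite_subset[of _ "{..dimension}"]) (auto intro: dim_subset_UNIV)
  ultimately obtain R where R: "R \<in> ?S" "dim R = Max (dim ` ?S)"
    using Max_in[OF fin] by fastforce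
  have "I \<subseteq> R" if I: "I \<in> ?S" for I
  proof -
    have sub: "subspace R" "subspace I" using R(1) I unfolding two_sided_ideal_def by auto
    have "span (I \<union> R) \<in> ?S" using ideal_span_Un solvable_span_Un I R(1) by auto
    then have "dim (span (I \<union> R)) \<le> dim R" unfolding R(2) by (intro Max_ge[OF fin] imageI)
    then have "span (I \<union> R) = R" using dim_strict_mono[OF sub(1) subspace_span] span_superset[of "I \<union> R"] by fastforce
    then show ?thesis using span_superset[of "I \<union> R"] by blast
  qed
  then show ?thesis using R(1) by blast
qed

lemma Rad_ideal: "ideal (Rad scL br)" and Rad_solvable: "solvable_sub scL br (Rad scL br)"
proof -
  obtain R where R: "ideal R" "solvable_sub scL br R" "\<forall>I. ideal I \<and> solvable_sub scL br I \<longrightarrow> I \<subseteq> R"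
    using largest_solvable_ideal_exists by blast
  have "Rad scL br = R" unfolding Rad_def by (rule the_equality) (use R in blast)+
  then show "ideal (Rad scL br)" "solvable_sub scL br (Rad scL br)" using R by auto
qed

lemma rad_L_subset_Rad: "rad_L scL br \<subseteq> Rad scL br"
proof -
  have sub: "subspace (Rad scL br)" using Rad_ideal unfolding two_sided_ideal_def by simp
  have id: "br a x \<in> Rad scL br" "br x a \<in> Rad scL br" if "a \<in> Rad scL br" for a x
    using Rad_ideal that unfolding two_sided_ideal_def by auto
  have "brk scL br (Rad scL br) UNIV \<subseteq> Rad scL br" "brk scL br UNIV (Rad scL br) \<subseteq> Rad scL br"
    by (rule brk_minimal[OF sub], simp add: id)+
  then show ?thesis unfolding rad_L_def using subspace_add[OF sub] by blast
qed

lemma rad_L_br: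
  assumes "c \<in> rad_L scL br" shows "br c x \<in> rad_L scL br"
proof -
  have "br c x \<in> brk scL br (Rad scL br) UNIV"
    using rad_L_subset_Rad assms by (intro brk_base) auto
  moreover have "0 \<in> brk scL br UNIV (Rad scL br)" by (simp add: subspace_0 subspace_brk)
  ultimately have "br c x + 0 \<in> rad_L scL br" unfolding rad_L_def by blast
  then show ?thesis by simp
qed

end

section \<open>Representations and invariant subquotients\<close>

locale fd_leibniz_rep = L: fd_leibniz_algebra scL br + V: fd_vector_space scV
  for scL :: "'k::field_char_0 \<Rightarrow> 'L::ab_group_add \<Rightarrow> 'L" and br :: "'L \<Rightarrow> 'L \<Rightarrow> 'L"
    and scV :: "'k \<Rightarrow> 'V::ab_group_add \<Rightarrow> 'V" +
  fixes l r :: "'L \<Rightarrow> 'V \<Rightarrow> 'V"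
  assumes rep: "leibniz_rep scL br scV l r"
begin

lemma linear_r: "V.lin (r x)" "Vector_Spaces.linear scL scV (\<lambda>x. r x v)"
  using rep unfolding leibniz_rep_def by auto

lemma r_br: "r (br x y) v = r y (r x v) - r x (r y v)"
  using rep unfolding leibniz_rep_def by auto

lemma r_simps:
  "r x (v + w) = r x v + r x w" "r x 0 = 0" "r x (v - w) = r x v - r x w"
  "r x (scV c v) = scV c (r x v)"
  "r (a + b) v = r a v + r b v" "r 0 v = 0" "r (a - b) v = r a v - r b v"
  "r (scL c a) v = scV c (r a v)" "r (sum f A) v = (\<Sum>i\<in>A. r (f i) v)"
  using linear_map_simps[OF linear_r(1)[of x]] linear_map_simps[OF linear_r(2)[of v]] by auto

definition r_invariant :: "'V set \<Rightarrow> bool" where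
  "r_invariant S \<longleftrightarrow> V.subspace S \<and> (\<forall>x. \<forall>v\<in>S. r x v \<in> S)"

lemma r_invariant_subspace: "r_invariant S \<Longrightarrow> V.subspace S"
  and r_invariant_r: "r_invariant S \<Longrightarrow> v \<in> S \<Longrightarrow> r x v \<in> S"
  and r_invariant_image: "r_invariant S \<Longrightarrow> r x ` S \<subseteq> S"
  by (auto simp: r_invariant_def)

lemma weight_iterates_triangular:
  assumes Y: "r_invariant Y" and I: "\<And>x a. a \<in> I \<Longrightarrow> br x a \<in> I"
    and w: "\<forall>a\<in>I. r a w - scV (wt a) w \<in> Y"
  shows "\<forall>a\<in>I. r a ((r x ^^ j) w) - scV (wt a) ((r x ^^ j) w) \<in> V.span_mod Y j (\<lambda>i. (r x ^^ i) w)"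
proof (induction j)
  case 0
  then show ?case using w by (simp add: V.span_mod_0)
next
  case (Suc j)
  let ?z = "\<lambda>i. (r x ^^ i) w"
  have Ys: "V.subspace Y" using Y by (rule r_invariant_subspace)
  note S = V.subspace_span_mod[OF Ys, of "Suc j" ?z]
  show ?case
  proof
    fix a assume a: "a \<in> I"
    have "r x (r a (?z j) - scV (wt a) (?z j)) \<in> V.span_mod Y (Suc j) ?z"
      using Suc a by (intro V.image_span_mod_iterates[OF Ys linear_r(1) r_invariant_image[OF Y]]) auto
    moreover have "r (br x a) (?z j) - scV (wt (br x a)) (?z j) \<in> V.span_mod Y (Suc j) ?z"
      using Suc I[OF a] V.span_mod_mono[OF Ys, of j "Suc j" ?z] by auto
    moreover have "scV (wt (br x a)) (?z j) \<in> V.span_mod Y (Suc j) ?z"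
      by (intro V.subspace_scale[OF S] V.span_mod_base[OF Ys]) simp
    moreover have "r a (?z (Suc j)) - scV (wt a) (?z (Suc j)) = r x (r a (?z j) - scV (wt a) (?z j))
        + (r (br x a) (?z j) - scV (wt (br x a)) (?z j)) + scV (wt (br x a)) (?z j)"
      using r_br[of x a "?z j"] by (simp add: r_simps)
    ultimately show "r a (?z (Suc j)) - scV (wt a) (?z (Suc j)) \<in> V.span_mod Y (Suc j) ?z"
      using V.subspace_add[OF S] by metis
  qed
qed

text \<open>Lie's invariance lemma: modulo \<open>Y\<close>, \<open>r\<^sub>a\<close> acts on the span of the iterates \<open>r\<^sub>x\<^sup>j w\<close> by a
  triangular matrix with diagonal \<open>wt a\<close>, so the commutator \<open>r\<^bsub>[x,a]\<^esub>\<close> of \<open>r\<^sub>a\<close> and \<open>r\<^sub>x\<close> has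
  constant diagonal \<open>wt [x,a]\<close> and vanishing trace.\<close>

lemma weight_br_left_eq_0:
  assumes Y: "r_invariant Y" and I: "\<And>x a. a \<in> I \<Longrightarrow> br x a \<in> I"
    and w: "w \<notin> Y" "\<forall>a\<in>I. r a w - scV (wt a) w \<in> Y" and a: "a \<in> I"
  shows "wt (br x a) = 0"
proof -
  have Ys: "V.subspace Y" using Y by (rule r_invariant_subspace)
  let ?z = "\<lambda>i. (r x ^^ i) w"
  obtain n where n: "n \<ge> 1" "V.independent_mod Y n ?z" "?z n \<in> V.span_mod Y n ?z"
    using V.exists_cyclic_basis_mod[OF Ys w(1)] by blast
  note tri = weight_iterates_triangular[OF Y I w(2)]
  note S = V.subspace_span_mod[OF Ys, of n ?z]
  show ?thesis
  proof (rule V.triangular_commutator_diagonal_eq_0[OF Ys n(2,1) linear_r(1)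
        r_invariant_image[OF Y] _ linear_r(1) r_invariant_image[OF Y]])
    show "\<forall>j<n. r a (?z j) \<in> V.span_mod Y n ?z"
    proof (intro allI impI)
      fix j assume j: "j < n"
      have "r a (?z j) - scV (wt a) (?z j) \<in> V.span_mod Y n ?z"
        using tri a V.span_mod_mono[OF Ys, of j n ?z] j by auto
      moreover have "scV (wt a) (?z j) \<in> V.span_mod Y n ?z"
        using j by (intro V.subspace_scale[OF S] V.span_mod_base[OF Ys])
      ultimately show "r a (?z j) \<in> V.span_mod Y n ?z" using V.subspace_add[OF S] by fastforce
    qed
    show "\<forall>j<n. r x (?z j) \<in> V.span_mod Y n ?z"
      using n(3) V.span_mod_base[OF Ys, of "Suc _" n ?z]
      by (metis Suc_lessI funpow.simps(2) o_apply)
    show "\<forall>j<n. r a (r x (?z j)) - r x (r a (?z j)) - scV (wt (br x a)) (?z j) \<in> V.span_mod Y j ?z"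
      using tri I[OF a] by (simp add: r_br[symmetric])
  qed
qed

lemma weight_vector_r_closed:
  assumes Y: "r_invariant Y" and I: "\<And>x a. a \<in> I \<Longrightarrow> br x a \<in> I"
    and w: "\<forall>a\<in>I. r a w - scV (wt a) w \<in> Y" and a: "a \<in> I"
  shows "r a (r x w) - scV (wt a) (r x w) \<in> Y"
proof (cases "w \<in> Y")
  case True
  have Ys: "V.subspace Y" using Y by (rule r_invariant_subspace)
  show ?thesis using True r_invariant_r[OF Y] V.subspace_diff[OF Ys] V.subspace_scale[OF Ys] by blast
next
  case False
  have "r a (r x w) - scV (wt a) (r x w) = r x (r a w - scV (wt a) w) + (r (br x a) w - scV (wt (br x a)) w)"
    using r_br[of x a w] weight_br_left_eq_0[OF Y I False w a] by (simp add: r_simps)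
  then show ?thesis
    using w a I[OF a] r_invariant_r[OF Y] V.subspace_add[OF r_invariant_subspace[OF Y]] by simp
qed

definition irreducible_mod :: "'V set \<Rightarrow> 'V set \<Rightarrow> bool" where
  "irreducible_mod Y X \<longleftrightarrow> r_invariant Y \<and> r_invariant X \<and> Y \<subset> X
     \<and> (\<forall>Z. r_invariant Z \<and> Y \<subseteq> Z \<and> Z \<subseteq> X \<longrightarrow> Z = Y \<or> Z = X)"

definition acts_scalar_mod :: "'V set \<Rightarrow> 'V set \<Rightarrow> 'L \<Rightarrow> bool" where
  "acts_scalar_mod Y X a \<longleftrightarrow> (\<exists>c. \<forall>w\<in>X. r a w - scV c w \<in> Y)"

lemma br_scalar_acts_zero_mod:
  assumes Y: "r_invariant Y" and X: "r_invariant X" and u: "acts_scalar_mod Y X u" and w: "w \<in> X"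
  shows "r (br u x) w \<in> Y" and "r (br x u) w \<in> Y"
proof -
  obtain c where c: "\<forall>w\<in>X. r u w - scV c w \<in> Y" using u unfolding acts_scalar_mod_def by blast
  have h1: "r x (r u w - scV c w) \<in> Y" using c w r_invariant_r[OF Y] by blast
  have h2: "r u (r x w) - scV c (r x w) \<in> Y" using c r_invariant_r[OF X w] by blast
  have "r (br u x) w = r x (r u w - scV c w) - (r u (r x w) - scV c (r x w))"
    and "r (br x u) w = (r u (r x w) - scV c (r x w)) - r x (r u w - scV c w)"
    by (simp_all add: r_br r_simps)
  then show "r (br u x) w \<in> Y" and "r (br x u) w \<in> Y"
    using V.subspace_diff[OF r_invariant_subspace[OF Y]] h1 h2 by simp_all
qed

lemma r_invariant_0: "r_invariant {0}"
  unfolding r_invariant_def by (simp add: r_simps)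

lemma exists_irreducible_mod:
  assumes X: "r_invariant X" and nz: "X \<noteq> {0}"
  shows "\<exists>Y. irreducible_mod Y X"
proof -
  let ?S = "{Y. r_invariant Y \<and> Y \<subset> X}"
  have "{0} \<in> ?S" using r_invariant_0 V.subspace_0[OF r_invariant_subspace[OF X]] nz by auto
  moreover have fin: "finite (V.dim ` ?S)"
    by (rule finite_subset[of _ "{..V.dimension}"]) (auto intro: V.dim_subset_UNIV)
  ultimately obtain Y where Y: "Y \<in> ?S" "V.dim Y = Max (V.dim ` ?S)"
    using Max_in[OF fin] by fastforce
  have "Z = Y \<or> Z = X" if Z: "r_invariant Z" "Y \<subseteq> Z" "Z \<subseteq> X" for Z
  proof (rule ccontr)
    assume ne: "\<not> (Z = Y \<or> Z = X)"
    then have "V.dim Z \<le> V.dim Y" unfolding Y(2) using Z by (intro Max_ge[OF fin] imageI) auto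
    moreover have "V.dim Y < V.dim Z"
      using Y(1) Z ne by (intro V.dim_strict_mono r_invariant_subspace) auto
    ultimately show False by simp
  qed
  then show ?thesis using Y(1) X unfolding irreducible_mod_def by blast
qed

primrec rad_L_series :: "nat \<Rightarrow> 'V set" where
  "rad_L_series 0 = UNIV"
| "rad_L_series (Suc i) = V.span {r c v | c v. c \<in> rad_L scL br \<and> v \<in> rad_L_series i}"

lemma r_invariant_rad_L_series: "r_invariant (rad_L_series i)"
proof (induction i)
  case 0
  then show ?case unfolding r_invariant_def by simp
next
  case (Suc i)
  let ?G = "{r c v | c v. c \<in> rad_L scL br \<and> v \<in> rad_L_series i}"
  have "V.span ?G \<subseteq> {u. r x u \<in> V.span ?G}" for x
  proof (rule V.span_minimal[OF _ subspace_linear_vimage[OF linear_r(1) V.subspace_span]], clarify)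
    fix c v assume c: "c \<in> rad_L scL br" and v: "v \<in> rad_L_series i"
    have "r c (r x v) \<in> ?G" "r (br c x) v \<in> ?G"
      using c v r_invariant_r[OF Suc.IH] L.rad_L_br by blast+
    then have "r c (r x v) + r (br c x) v \<in> V.span ?G" by (intro V.span_add V.span_base)
    then show "r x (r c v) \<in> V.span ?G" by (simp add: r_br)
  qed
  then show ?case unfolding r_invariant_def by auto
qed

lemma foldr_r_in_rad_L_series: "set bs \<subseteq> rad_L scL br \<Longrightarrow> foldr r bs v \<in> rad_L_series (length bs)"
  by (induction bs) (auto intro!: V.span_base)

end

section \<open>Lie's theorem for the radical\<close>

locale alg_closed_fd_leibniz_rep = fd_leibniz_rep scL br scV l r
  for scL :: "'k::field_char_0 \<Rightarrow> 'L::ab_group_add \<Rightarrow> 'L" and br :: "'L \<Rightarrow> 'L \<Rightarrow> 'L"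
    and scV :: "'k \<Rightarrow> 'V::ab_group_add \<Rightarrow> 'V" and l r :: "'L \<Rightarrow> 'V \<Rightarrow> 'V" +
  assumes alg_closed: "alg_closed TYPE('k)"
begin

lemma common_weight_vector:
  assumes Y: "r_invariant Y" and X: "r_invariant X" "Y \<subset> X" and I: "L.subspace I"
    and comm: "\<forall>a\<in>I. \<forall>b\<in>I. \<forall>w\<in>X. r (br a b) w \<in> Y"
  shows "\<exists>v\<in>X. v \<notin> Y \<and> (\<exists>wt. \<forall>a\<in>I. r a v - scV (wt a) v \<in> Y)"
proof -
  have Ys: "V.subspace Y" and Xs: "V.subspace X" using Y X by (auto intro: r_invariant_subspace)
  obtain p as where as: "\<forall>i<p. as i \<in> I" "L.span_mod {0} p as = I"
    using L.exists_basis_mod[OF L.subspace_single_0 I] L.subspace_0[OF I] by blast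
  obtain v c where v: "v \<in> X" "v \<notin> Y" "\<forall>i<p. r (as i) v - scV (c i) v \<in> Y"
  proof -
    have "\<exists>v\<in>X. v \<notin> Y \<and> (\<exists>c. \<forall>i<p. r (as i) v - scV (c i) v \<in> Y)"
    proof (rule V.common_eigenvector_mod[OF alg_closed Ys Xs X(2)])
      show "\<forall>i<p. V.lin (r (as i)) \<and> r (as i) ` Y \<subseteq> Y \<and> r (as i) ` X \<subseteq> X"
        using linear_r(1) r_invariant_image[OF Y] r_invariant_image[OF X(1)] by blast
      show "\<forall>i<p. \<forall>j<p. \<forall>w\<in>X. r (as i) (r (as j) w) - r (as j) (r (as i) w) \<in> Y"
        using comm as(1) by (auto simp: r_br[symmetric])
    qed
    then show ?thesis using that by blast
  qed
  have ex: "\<exists>d. r a v - scV d v \<in> Y" if a: "a \<in> I" for a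
  proof -
    obtain t where "a - (\<Sum>i<p. scL (t i) (as i)) \<in> {0}"
      using a as(2) unfolding L.span_mod_def by blast
    then have "r a v - scV (\<Sum>i<p. t i * c i) v = (\<Sum>i<p. scV (t i) (r (as i) v - scV (c i) v))"
      by (simp add: r_simps V.scale_sum_left V.scale_right_diff_distrib sum_subtractf)
    also have "\<dots> \<in> Y" using v(3) by (intro V.subspace_sum[OF Ys] V.subspace_scale[OF Ys]) auto
    finally show ?thesis by blast
  qed
  define wt where "wt a = (SOME d. r a v - scV d v \<in> Y)" for a
  have "r a v - scV (wt a) v \<in> Y" if "a \<in> I" for a
    unfolding wt_def by (rule someI_ex) (rule ex[OF that])
  then show ?thesis using v(1,2) by blast
qed

lemma scalar_action_from_derived:
  assumes irr: "irreducible_mod Y X" and I: "L.subspace I" and left: "\<And>x a. a \<in> I \<Longrightarrow> br x a \<in> I"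
    and der: "\<forall>c\<in>brk scL br I I. acts_scalar_mod Y X c"
  shows "\<forall>a\<in>I. acts_scalar_mod Y X a"
proof -
  have Y: "r_invariant Y" and X: "r_invariant X" and YX: "Y \<subset> X"
    and max: "\<And>Z. r_invariant Z \<Longrightarrow> Y \<subseteq> Z \<Longrightarrow> Z \<subseteq> X \<Longrightarrow> Z = Y \<or> Z = X"
    using irr unfolding irreducible_mod_def by auto
  have Ys: "V.subspace Y" and Xs: "V.subspace X" using Y X by (auto intro: r_invariant_subspace)
  have "r (br a b) w \<in> Y" if ab: "a \<in> I" "b \<in> I" and w: "w \<in> X" for a b w
  proof -
    obtain \<mu> where \<mu>: "\<forall>w\<in>X. r (br a b) w - scV \<mu> w \<in> Y"
      using der L.brk_base[OF ab] unfolding acts_scalar_mod_def by blast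
    have "\<mu> = 0"
      using \<mu> by (intro V.commutator_scalar_mod_eq_0[OF Ys Xs YX, of "r b" "r a"])
        (simp_all add: linear_r r_invariant_image[OF Y] r_invariant_image[OF X] r_br)
    then show ?thesis using \<mu> w by simp
  qed
  then obtain v wt where v: "v \<in> X" "v \<notin> Y" "\<forall>a\<in>I. r a v - scV (wt a) v \<in> Y"
    using common_weight_vector[OF Y X YX I] by blast
  define W where "W = {w\<in>X. \<forall>a\<in>I. r a w - scV (wt a) w \<in> Y}"
  have "V.subspace W" unfolding W_def by (rule V.subspace_weight_mod[OF Xs Ys linear_r(1)])
  moreover have "r x w \<in> W" if w: "w \<in> W" for x w
  proof -
    have hw: "\<forall>a\<in>I. r a w - scV (wt a) w \<in> Y" and wX: "w \<in> X" using w unfolding W_def by auto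
    have "\<forall>a\<in>I. r a (r x w) - scV (wt a) (r x w) \<in> Y"
      using weight_vector_r_closed[OF Y left hw] by blast
    moreover have "r x w \<in> X" using r_invariant_r[OF X wX] .
    ultimately show ?thesis unfolding W_def by blast
  qed
  ultimately have "r_invariant W" unfolding r_invariant_def by blast
  moreover have "Y \<subseteq> W"
    unfolding W_def using YX r_invariant_image[OF Y] by (intro V.weight_mod_superset[OF Ys]) auto
  ultimately have "W = X" using max[of W] v unfolding W_def by blast
  then show ?thesis unfolding acts_scalar_mod_def W_def by blast
qed

lemma Rad_acts_scalar_mod:
  assumes irr: "irreducible_mod Y X" and a: "a \<in> Rad scL br"
  shows "acts_scalar_mod Y X a"
proof -
  have R: "L.subspace (Rad scL br)" and left: "\<And>x a. a \<in> Rad scL br \<Longrightarrow> br x a \<in> Rad scL br"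
    using L.Rad_ideal unfolding two_sided_ideal_def by auto
  obtain m where m: "L.der m (Rad scL br) = {0}"
    using L.Rad_solvable unfolding solvable_sub_def by blast
  have "\<forall>a\<in>L.der k (Rad scL br). acts_scalar_mod Y X a" if "k \<le> m" for k
    using that
  proof (induction rule: inc_induct)
    case base
    have "V.subspace Y" using irr unfolding irreducible_mod_def by (auto intro: r_invariant_subspace)
    then have "r 0 w - scV 0 w \<in> Y" for w by (simp add: r_simps V.subspace_0)
    then show ?case unfolding m acts_scalar_mod_def by blast
  next
    case (step k)
    show ?case
    proof (rule scalar_action_from_derived[OF irr L.subspace_derived[OF R]])
      show "br x a \<in> L.der k (Rad scL br)" if "a \<in> L.der k (Rad scL br)" for x a
        using L.derived_left_ideal[OF R left that] .
      show "\<forall>c\<in>brk scL br (L.der k (Rad scL br)) (L.der k (Rad scL br)). acts_scalar_mod Y X c"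
        using step.IH by simp
    qed
  qed
  from this[of 0] show ?thesis using a by simp
qed

lemma rad_L_acts_zero_mod:
  assumes irr: "irreducible_mod Y X" and c: "c \<in> rad_L scL br" and w: "w \<in> X"
  shows "r c w \<in> Y"
proof -
  have Y: "r_invariant Y" and X: "r_invariant X" using irr unfolding irreducible_mod_def by auto
  have Ys: "V.subspace Y" using Y by (rule r_invariant_subspace)
  let ?G = "{c. \<forall>w\<in>X. r c w \<in> Y}"
  have "L.subspace (\<Inter>w\<in>X. {c. r c w \<in> Y})"
    by (intro L.subspace_Int subspace_linear_vimage[OF linear_r(2) Ys])
  moreover have "(\<Inter>w\<in>X. {c. r c w \<in> Y}) = ?G" by blast
  ultimately have G: "L.subspace ?G" by simp
  note zero = br_scalar_acts_zero_mod[OF Y X Rad_acts_scalar_mod[OF irr]]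
  have "brk scL br (Rad scL br) UNIV \<subseteq> ?G" "brk scL br UNIV (Rad scL br) \<subseteq> ?G"
    by (rule L.brk_minimal[OF G], simp add: zero)+
  moreover obtain a b where ab: "c = a + b" "a \<in> brk scL br (Rad scL br) UNIV" "b \<in> brk scL br UNIV (Rad scL br)"
    using c unfolding rad_L_def by blast
  ultimately have "r a w \<in> Y" "r b w \<in> Y" using w by blast+
  then show ?thesis unfolding \<open>c = a + b\<close> r_simps by (rule V.subspace_add[OF Ys])
qed

lemma rad_L_series_psubset:
  assumes nz: "rad_L_series i \<noteq> {0}"
  shows "rad_L_series (Suc i) \<subset> rad_L_series i"
proof -
  obtain Y where irr: "irreducible_mod Y (rad_L_series i)"
    using exists_irreducible_mod[OF r_invariant_rad_L_series nz] by blast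
  then have "V.subspace Y" "Y \<subset> rad_L_series i"
    unfolding irreducible_mod_def by (auto intro: r_invariant_subspace)
  moreover have "rad_L_series (Suc i) \<subseteq> Y"
    unfolding rad_L_series.simps using rad_L_acts_zero_mod[OF irr] \<open>V.subspace Y\<close>
    by (intro V.span_minimal) auto
  ultimately show ?thesis by blast
qed

lemma rad_L_series_dimension: "rad_L_series i = {0} \<or> V.dim (rad_L_series i) + i \<le> V.dimension"
proof (induction i)
  case 0
  then show ?case by (simp add: V.dimension_def)
next
  case (Suc i)
  show ?case
  proof (cases "rad_L_series i = {0}")
    case True
    then have "rad_L_series (Suc i) \<subseteq> {0}"
      unfolding rad_L_series.simps by (intro V.span_minimal V.subspace_single_0) (auto simp: r_simps)
    then show ?thesis
      using V.subspace_0[OF r_invariant_subspace[OF r_invariant_rad_L_series]] by blast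
  next
    case False
    then have "V.dim (rad_L_series (Suc i)) < V.dim (rad_L_series i)"
      using rad_L_series_psubset r_invariant_rad_L_series
      by (intro V.dim_strict_mono r_invariant_subspace)
    then show ?thesis using Suc False by simp
  qed
qed

theorem rad_L_r_nilpotent:
  "\<exists>m::nat. m \<ge> 1 \<and> (\<forall>bs. length bs = m \<and> set bs \<subseteq> rad_L scL br \<longrightarrow> (\<forall>v. foldr r bs v = 0))"
proof -
  have "rad_L_series (Suc V.dimension) = {0}" using rad_L_series_dimension[of "Suc V.dimension"] by auto
  then show ?thesis using foldr_r_in_rad_L_series by (intro exI[of _ "Suc V.dimension"]) fastforce
qed

end

theorem proposition4p2:
  fixes scL :: "'k::field_char_0 \<Rightarrow> 'L::ab_group_add \<Rightarrow> 'L"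
    and br :: "'L \<Rightarrow> 'L \<Rightarrow> 'L"
    and scV :: "'k \<Rightarrow> 'V::ab_group_add \<Rightarrow> 'V"
    and l r :: "'L \<Rightarrow> 'V \<Rightarrow> 'V"
  assumes "alg_closed TYPE('k)"
    and "fin_dim_vs scL" and "fin_dim_vs scV"
    and "leibniz_algebra scL br"
    and "leibniz_rep scL br scV l r"
  shows "\<exists>m::nat. m \<ge> 1 \<and>
           (\<forall>bs. length bs = m \<and> set bs \<subseteq> rad_L scL br \<longrightarrow> (\<forall>v. foldr r bs v = 0))"
proof -
  interpret alg_closed_fd_leibniz_rep scL br scV l r
    using assms unfolding alg_closed_fd_leibniz_rep_def alg_closed_fd_leibniz_rep_axioms_def
      fd_leibniz_rep_def fd_leibniz_rep_axioms_def fd_leibniz_algebra_def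
      fd_leibniz_algebra_axioms_def fd_vector_space_def fd_vector_space_axioms_def fin_dim_vs_def
    by auto
  show ?thesis by (rule rad_L_r_nilpotent)
qed

end
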